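(* Let $(F_n)_{n\ge 0}$ be the Fibonacci sequence with $F_0=0$, $F_1=1$, $F_n=F_{n-1}+F_{n-2}$, and let $b_n=\dfrac{F_{7n}}{13}$ for $n\ge 0$. For every integer $m\ge 0$, $$[\underbrace{29,29,\dots,29}_{m+1}]=\frac{b_{m+2}}{b_{m+1}},$$ where the continued fraction has $m+1$ entries all equal to $29$.
   Context: For numbers $a_0,a_1,\dots,a_m$, the finite simple continued fraction $[a_0,a_1,\dots,a_m]$ denotes $a_0+\cfrac{1}{a_1+\cfrac{1}{\ddots+\cfrac{1}{a_m}}}$, evaluated as a rational number; $[a_0]=a_0$. *)

theory Defs
  imports Complex_Main "HOL-Number_Theory.Fib"
begin

text \<open>Finite simple continued fraction [a0, a1, ..., am] evaluated in the rationals.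
  The empty list is not a valid continued fraction; it is given value 0 only for totality.\<close>
fun cfrac :: "rat list \<Rightarrow> rat" where
  "cfrac [] = 0"
| "cfrac [a] = a"
| "cfrac (a # b # rest) = a + 1 / cfrac (b # rest)"

definition bseq :: "nat \<Rightarrow> rat" where
  "bseq n = of_nat (fib (7 * n)) / 13"

end

theory Submission
  imports Defs
begin

text \<open>An all-\<open>a\<close> continued fraction is a ratio of consecutive terms of any solution of
  \<open>u (n + 2) = a u (n + 1) + u n\<close> started with \<open>u 1 = a u 0\<close>, provided the solution does not
  vanish: peeling off the leading entry is exactly one step of the recurrence.  For
  \<open>a = 29 = L\<^sub>7\<close> such a solution is \<open>n \<mapsto> F\<^bsub>7n+7\<^esub>\<close>, by the Lucas-type identity
  \<open>F\<^bsub>n+14\<^esub> = L\<^sub>7 F\<^bsub>n+7\<^esub> + F\<^sub>n\<close>.\<close>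

lemma cfrac_replicate_eq_ratio:
  fixes u :: "nat \<Rightarrow> rat"
  assumes rec: "\<And>n. u (n + 2) = a * u (n + 1) + u n"
    and start: "u 1 = a * u 0"
    and nonzero: "\<And>n. u (Suc n) \<noteq> 0"
  shows "cfrac (replicate (Suc m) a) = u (Suc m) / u m"
proof (induction m)
  case 0
  have "u 0 \<noteq> 0"
    using start nonzero[of 0] by auto
  then show ?case
    using start by simp
next
  case (Suc m)
  have "cfrac (replicate (Suc (Suc m)) a) = a + u m / u (Suc m)"
    using Suc by simp
  also have "\<dots> = (a * u (Suc m) + u m) / u (Suc m)"
    using nonzero[of m] by (simp add: field_simps)
  also have "\<dots> = u (Suc (Suc m)) / u (Suc m)"
    using rec[of m] by simp
  finally show ?case .
qed

lemma fib_add_14: "fib (n + 14) = 29 * fib (n + 7) + fib n"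
proof (induction n rule: fib.induct)
  case 1
  show ?case by (simp add: numeral_eq_Suc)
next
  case 2
  show ?case by (simp add: numeral_eq_Suc)
next
  case (3 n)
  then show ?case
    using fib_plus_2[of "n + 14"] fib_plus_2[of "n + 7"] fib_plus_2[of n]
    by (simp add: algebra_simps)
qed

theorem theorem8:
  fixes m :: nat
  shows "cfrac (replicate (m + 1) 29) = bseq (m + 2) / bseq (m + 1)"
proof -
  define u where "u n = bseq (n + 1)" for n
  have "u (n + 2) = 29 * u (n + 1) + u n" for n
    using fib_add_14[of "7 * n + 7"] by (simp add: u_def bseq_def algebra_simps)
  moreover have "u 1 = 29 * u 0"
    using fib_add_14[of 0] by (simp add: u_def bseq_def)
  moreover have "u (Suc n) \<noteq> 0" for n
    using fib_neq_0_nat[of "7 * (n + 2)"] by (simp add: u_def bseq_def)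
  ultimately have "cfrac (replicate (Suc m) 29) = u (Suc m) / u m"
    by (rule cfrac_replicate_eq_ratio)
  then show ?thesis by (simp add: u_def)
qed

end
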